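(* Let $\mathcal{L}:\mathbb{R}^d\to\mathbb{R}$ be differentiable with $\nabla\mathcal{L}$ Lipschitz continuous with constant $L$. Run full-batch MoFO with $\beta_1<\sqrt{\beta_2}<1$, $\epsilon=0$ and learning rates $\eta_t=\eta/\sqrt t$ ($\eta>0$). Then for every iteration $t\ge1$ and every coordinate $i$, $$g_{i,t}\frac{\hat m_{i,t}}{\sqrt{\hat v_{i,t}}}\ge\sqrt{1-\beta_2}\left(|g_{i,t}|-\left[\frac{2\sqrt2\,\beta_1}{(1-\beta_1)^2}+\frac{4}{1-\beta_2}\right]\frac{LC\eta}{\sqrt t}\right),$$ where $C=\dfrac{\sqrt{d\cdot(\alpha\%)+B}}{\sqrt{1-\beta_2}\,(1-\beta_1/\sqrt{\beta_2})}$.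
   Context: The coordinates of $\mathbb{R}^d$ are partitioned into $B$ blocks of sizes $d_1,\dots,d_B$ with $\sum_kd_k=d$. Fix $\alpha\%\in(0,1]$. For $z\in\mathbb{R}^d$, $\texttt{FLT}_\alpha(z)\in\{0,1\}^d$ equals, in each block $k$, $1$ exactly on a set of $\lceil d_k\cdot\alpha\%\rceil$ indices with the largest absolute values of $z$ within that block (ties broken in favour of smaller indices), and $0$ elsewhere. Full-batch MoFO with $\beta_1,\beta_2\in(0,1)$, learning rates $\eta_t>0$, initial point $\theta_0$: $m_0=v_0=0$; for $t\ge1$, $g_t=\nabla\mathcal{L}(\theta_{t-1})$, $m_t=\beta_1m_{t-1}+(1-\beta_1)g_t$, $v_t=\beta_2v_{t-1}+(1-\beta_2)g_t\odot g_t$, $\hat m_t=m_t/(1-\beta_1^t)$, $\hat v_t=v_t/(1-\beta_2^t)$, $\theta_t=\theta_{t-1}-\eta_t(\hat m_t\odot\texttt{FLT}_\alpha(m_t))/\sqrt{\hat v_t}$ entrywise ($\epsilon=0$: no additive constant in the denominator; a quotient with $\hat v_{i,t}=0$, where necessarily $\hat m_{i,t}=0$, is taken as $0$). Subscript $i,t$ denotes the $i$-th coordinate at iteration $t$. *)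

theory Defs
  imports "HOL-Analysis.Analysis"
begin

text \<open>Coordinates of R^d are the elements of a finite linearly ordered index type 'n
  (d = CARD('n)); the order on 'n is the order of indices used for tie breaking.
  The block partition is given by a block-assignment function blk with values below B;
  block k is the set of coordinates i with blk i = k, of size d_k.\<close>

definition block_size :: "('n::finite \<Rightarrow> nat) \<Rightarrow> nat \<Rightarrow> nat" where
  "block_size blk k = card {i. blk i = k}"

definition block_rank :: "('n::{finite,linorder} \<Rightarrow> nat) \<Rightarrow> (real^'n::{finite,linorder}) \<Rightarrow> 'n::{finite,linorder} \<Rightarrow> nat" where
  "block_rank blk z j = card {i. blk i = blk j \<and>
      (\<bar>z$i\<bar> > \<bar>z$j\<bar> \<or> (\<bar>z$i\<bar> = \<bar>z$j\<bar> \<and> i < j))}"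

text \<open>FLT_alpha(z), with a = alpha% in (0,1].\<close>
definition FLT :: "('n::{finite,linorder} \<Rightarrow> nat) \<Rightarrow> real \<Rightarrow> (real^'n::{finite,linorder}) \<Rightarrow> (real^'n::{finite,linorder})" where
  "FLT blk a z = (\<chi> j. if block_rank blk z j < nat \<lceil>real (block_size blk (blk j)) * a\<rceil>
                        then 1 else 0)"

primrec mofo :: "((real^'n::{finite,linorder}) \<Rightarrow> (real^'n::{finite,linorder})) \<Rightarrow> ('n::{finite,linorder} \<Rightarrow> nat) \<Rightarrow> real
    \<Rightarrow> real \<Rightarrow> real \<Rightarrow> (nat \<Rightarrow> real) \<Rightarrow> (real^'n::{finite,linorder}) \<Rightarrow> nat \<Rightarrow> (real^'n::{finite,linorder}) \<times> (real^'n::{finite,linorder}) \<times> (real^'n::{finite,linorder})" where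
  "mofo G blk a b1 b2 eta th0 0 = (th0, 0, 0)"
| "mofo G blk a b1 b2 eta th0 (Suc t) =
     (let (th, m, v) = mofo G blk a b1 b2 eta th0 t;
          g = G th;
          m' = b1 *\<^sub>R m + (1 - b1) *\<^sub>R g;
          v' = b2 *\<^sub>R v + (1 - b2) *\<^sub>R (\<chi> i. (g$i)^2);
          mh = (1 / (1 - b1 ^ Suc t)) *\<^sub>R m';
          vh = (1 / (1 - b2 ^ Suc t)) *\<^sub>R v';
          f = FLT blk a m';
          th' = th - (\<chi> i. eta (Suc t) * (mh$i * f$i) / sqrt (vh$i))
      in (th', m', v'))"

definition mofo_theta where "mofo_theta G blk a b1 b2 eta th0 t = fst (mofo G blk a b1 b2 eta th0 t)"
definition mofo_m where "mofo_m G blk a b1 b2 eta th0 t = fst (snd (mofo G blk a b1 b2 eta th0 t))"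
definition mofo_v where "mofo_v G blk a b1 b2 eta th0 t = snd (snd (mofo G blk a b1 b2 eta th0 t))"

end

(*
  Write t = n + 1.  The moments of coordinate i are exponential moving averages
  of its past gradients, m_t = ema b1 n g and v_t = ema b2 n g^2.  Since
  b1 < sqrt b2, the recursion preserves |m_t| <= (1 - b1) M sqrt v_t with
  M = 1 / (sqrt (1 - b2) (1 - b1 / sqrt b2)), so every coordinate of an update
  is at most eta_t (1 - b1) M / (1 - b1^t); as FLT keeps at most d a + B
  coordinates, a step has length at most C eta_t (1 - b1) / (1 - b1^t).
  By the Lipschitz bound every past gradient g_s is then within L C eta times a
  tail sum of 1 / sqrt r of g_t.  Averaging these drifts with the EMA weights
  shows that the bias-corrected first moment is within 2 X of g_t and that the
  square root of the bias-corrected second moment lies between sqrt (1 - b2) |g_t|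
  and |g_t| + 4 sqrt b2 X / (1 - b2), where X = L C eta / sqrt t; a case analysis
  on the size of g_t and the sign of g_t m_t turns this into the bound.
*)

theory Submission
  imports Defs
begin

section \<open>Sums of inverse square roots and of weighted squares\<close>

lemma one_minus_power_le:
  fixes b :: real
  assumes "0 \<le> b" "b \<le> 1"
  shows "1 - b ^ t \<le> real t * (1 - b)"
  using Bernoulli_inequality[of "b - 1" t] assms by (simp add: algebra_simps)

lemma sqrt_add_one_diff_le:
  fixes t :: real
  assumes "0 \<le> t"
  shows "2 * sqrt t * (sqrt (t + 1) - sqrt t) \<le> 1"
proof -
  have "0 \<le> (sqrt (t + 1) - sqrt t)\<^sup>2" by simp
  also have "\<dots> = 2 * t + 1 - 2 * sqrt t * sqrt (t + 1)"
    using assms by (simp add: power2_eq_square algebra_simps)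
  finally have "2 * sqrt t * sqrt (t + 1) \<le> 2 * t + 1" by simp
  moreover have "sqrt t * sqrt t = t" using assms by simp
  moreover have "2 * sqrt t * (sqrt (t + 1) - sqrt t) = 2 * sqrt t * sqrt (t + 1) - 2 * (sqrt t * sqrt t)"
    by (simp add: algebra_simps)
  ultimately show ?thesis by linarith
qed

lemma inv_sqrt_le_sqrt_add_one_diff:
  fixes m :: real
  assumes m: "1 \<le> m"
  shows "1 / sqrt m \<le> 2 * sqrt 2 * (sqrt (m + 1) - sqrt m)"
proof -
  have sm: "0 < sqrt m" using m by simp
  have "sqrt (m + 1) \<le> sqrt 2 * sqrt m"
    using m by (simp flip: real_sqrt_mult)
  moreover have "sqrt m \<le> sqrt 2 * sqrt m" using sm by simp
  ultimately have le: "sqrt (m + 1) + sqrt m \<le> 2 * sqrt 2 * sqrt m" by linarith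
  have pos: "0 < sqrt (m + 1) + sqrt m" using sm by (simp add: add_nonneg_pos)
  have "1 / sqrt m = 2 * sqrt 2 * (1 / (2 * sqrt 2 * sqrt m))" using sm by simp
  also have "\<dots> \<le> 2 * sqrt 2 * (1 / (sqrt (m + 1) + sqrt m))"
    using le pos sm by (intro mult_left_mono divide_left_mono) (auto intro!: mult_pos_pos)
  also have "1 / (sqrt (m + 1) + sqrt m) = sqrt (m + 1) - sqrt m"
    using m pos by (simp add: field_simps)
  finally show ?thesis .
qed

lemma sum_inv_sqrt_le_sqrt_diff:
  assumes "s \<le> n"
  shows "(\<Sum>r\<in>{s..<n}. 1 / sqrt (real r + 1)) \<le> 2 * sqrt 2 * (sqrt (real n + 1) - sqrt (real s + 1))"
  using assms
proof (induction n)
  case (Suc n)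
  show ?case
  proof (cases "s = Suc n")
    case False
    then have "s \<le> n" using Suc.prems by simp
    then show ?thesis
      using Suc.IH inv_sqrt_le_sqrt_add_one_diff[of "real n + 1"] by (simp add: algebra_simps)
  qed simp
qed simp

lemma sum_inv_sqrt_le:
  assumes "s \<le> n"
  shows "(\<Sum>r\<in>{s..<n}. 1 / sqrt (real r + 1)) \<le> 2 * sqrt 2 * (real n - real s) / sqrt (real n + 1)"
proof -
  let ?u = "sqrt (real n + 1)" and ?v = "sqrt (real s + 1)"
  have pos: "0 < ?u" "0 < ?u + ?v" by (auto simp: add_pos_nonneg)
  have "?u - ?v = (real n - real s) / (?u + ?v)"
    using pos by (simp add: field_simps)
  also have "\<dots> \<le> (real n - real s) / ?u"
    using assms pos by (intro divide_left_mono) auto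
  finally have "2 * sqrt 2 * (?u - ?v) \<le> 2 * sqrt 2 * ((real n - real s) / ?u)"
    by (rule mult_left_mono) simp
  then show ?thesis
    using sum_inv_sqrt_le_sqrt_diff[OF assms] by simp
qed

lemma sum_power_div_sqrt_le_step:
  fixes b q t :: real
  assumes b: "0 \<le> b" "b < 1" and t: "1 \<le> t" and q: "1 - q \<le> t * (1 - b)" "q \<le> 1"
  shows "b * (2 * (1 - q) / ((1 - b) * sqrt t)) + 1 / sqrt (t + 1)
         \<le> 2 * (1 - b * q) / ((1 - b) * sqrt (t + 1))"
proof -
  have st: "0 < sqrt t" "0 < sqrt (t + 1)" using t by auto
  have "2 * b * (1 - q) * (sqrt (t + 1) - sqrt t) * sqrt t
        = b * (1 - q) * (2 * sqrt t * (sqrt (t + 1) - sqrt t))"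
    by (simp add: algebra_simps)
  also have "\<dots> \<le> b * (1 - q)"
    using sqrt_add_one_diff_le[of t] t b q by (intro mult_left_le) auto
  also have "\<dots> \<le> 1 - q"
    using b q by (simp add: mult_left_le_one_le)
  also have "\<dots> \<le> (1 - b) * (sqrt t * sqrt t)"
    using q t by (simp add: mult.commute)
  finally have "2 * b * (1 - q) * (sqrt (t + 1) - sqrt t) * sqrt t \<le> (1 - b) * sqrt t * sqrt t"
    by (simp only: mult.assoc)
  then have "2 * b * (1 - q) * (sqrt (t + 1) - sqrt t) \<le> (1 - b) * sqrt t"
    using st(1) by (rule mult_right_le_imp_le)
  then have key: "2 * b * (1 - q) * sqrt (t + 1) + (1 - b) * sqrt t \<le> 2 * (1 - b * q) * sqrt t"
    by (simp add: algebra_simps)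
  let ?W = "(1 - b) * sqrt t * sqrt (t + 1)"
  have "(b * (2 * (1 - q) / ((1 - b) * sqrt t)) + 1 / sqrt (t + 1)) * ?W
      = 2 * b * (1 - q) * sqrt (t + 1) + (1 - b) * sqrt t"
    using st b by (simp add: field_simps)
  also have "\<dots> \<le> 2 * (1 - b * q) * sqrt t"
    by (rule key)
  also have "\<dots> = 2 * (1 - b * q) / ((1 - b) * sqrt (t + 1)) * ?W"
    using st b by (simp add: field_simps)
  finally show ?thesis
    by (rule mult_right_le_imp_le) (use st b in simp)
qed

lemma sum_power_div_sqrt_le:
  fixes b :: real
  assumes b: "0 \<le> b" "b < 1"
  shows "(\<Sum>r\<le>n. b ^ (n - r) / sqrt (real r + 1)) \<le> 2 * (1 - b ^ Suc n) / ((1 - b) * sqrt (real n + 1))"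
proof (induction n)
  case 0
  then show ?case using b by (simp add: field_simps)
next
  case (Suc n)
  have "(\<Sum>r\<le>Suc n. b ^ (Suc n - r) / sqrt (real r + 1))
      = b * (\<Sum>r\<le>n. b ^ (n - r) / sqrt (real r + 1)) + 1 / sqrt ((real n + 1) + 1)"
    by (simp add: sum_distrib_left Suc_diff_le mult.assoc add.commute)
  also have "\<dots> \<le> b * (2 * (1 - b ^ Suc n) / ((1 - b) * sqrt (real n + 1))) + 1 / sqrt ((real n + 1) + 1)"
    by (intro add_right_mono mult_left_mono Suc.IH) (use b in simp)
  also have "\<dots> \<le> 2 * (1 - b * b ^ Suc n) / ((1 - b) * sqrt ((real n + 1) + 1))"
    using one_minus_power_le[of b "Suc n"] power_le_one[of b "Suc n"] b
    by (intro sum_power_div_sqrt_le_step) (auto simp: add.commute)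
  finally show ?case by (simp add: add.commute)
qed

lemma sum_power_mult_square_eq:
  fixes b :: real
  shows "(1 - b)^3 * (\<Sum>k<N. b ^ k * (real k)\<^sup>2)
       = b * (1 + b) - b ^ N * ((1 - b)\<^sup>2 * (real N)\<^sup>2 + 2 * real N * b * (1 - b) + b * (1 + b))"
proof (induction N)
  case (Suc N)
  have "(1 - b)^3 * (\<Sum>k<Suc N. b ^ k * (real k)\<^sup>2)
      = (1 - b)^3 * (\<Sum>k<N. b ^ k * (real k)\<^sup>2) + (1 - b)^3 * (b ^ N * (real N)\<^sup>2)"
    by (simp add: distrib_left)
  also have "\<dots> = b * (1 + b) - b ^ Suc N * ((1 - b)\<^sup>2 * (real (Suc N))\<^sup>2 + 2 * real (Suc N) * b * (1 - b) + b * (1 + b))"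
    unfolding Suc.IH by (simp add: power2_eq_square power3_eq_cube algebra_simps)
  finally show ?case .
qed simp

section \<open>Exponential moving averages\<close>

definition ema :: "real \<Rightarrow> nat \<Rightarrow> (nat \<Rightarrow> real) \<Rightarrow> real" where
  "ema b n y = (\<Sum>s\<le>n. (1 - b) * b ^ (n - s) * y s)"

lemma ema_0: "ema b 0 y = (1 - b) * y 0"
  unfolding ema_def by simp

lemma ema_Suc: "ema b (Suc n) y = b * ema b n y + (1 - b) * y (Suc n)"
  unfolding ema_def by (simp add: sum_distrib_left Suc_diff_le mult.assoc mult.left_commute)

lemma ema_diff: "ema b n (\<lambda>s. y s - z s) = ema b n y - ema b n z"
  unfolding ema_def by (simp add: right_diff_distrib sum_subtractf)

lemma ema_scale: "ema b n (\<lambda>s. c * y s) = c * ema b n y"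
  unfolding ema_def by (simp add: sum_distrib_left mult.left_commute)

lemma ema_mono:
  assumes "0 \<le> b" "b \<le> 1" "\<And>s. s \<le> n \<Longrightarrow> y s \<le> z s"
  shows "ema b n y \<le> ema b n z"
  unfolding ema_def using assms by (intro sum_mono mult_left_mono) auto

lemma ema_nonneg:
  assumes "0 \<le> b" "b \<le> 1" "\<And>s. s \<le> n \<Longrightarrow> 0 \<le> y s"
  shows "0 \<le> ema b n y"
  unfolding ema_def using assms by (intro sum_nonneg) auto

lemma abs_ema_le:
  assumes "0 \<le> b" "b \<le> 1"
  shows "\<bar>ema b n y\<bar> \<le> ema b n (\<lambda>s. \<bar>y s\<bar>)"
  unfolding ema_def
  by (rule order_trans[OF sum_abs], rule sum_mono) (use assms in \<open>simp add: abs_mult\<close>)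

lemma ema_last_le:
  assumes "0 \<le> b" "b \<le> 1" "\<And>s. s \<le> n \<Longrightarrow> 0 \<le> y s"
  shows "(1 - b) * y n \<le> ema b n y"
proof -
  have "(1 - b) * b ^ (n - n) * y n \<le> ema b n y"
    unfolding ema_def using assms by (intro member_le_sum) auto
  then show ?thesis by simp
qed

lemma sum_geometric_weights:
  fixes b :: real
  assumes "r \<le> n"
  shows "(\<Sum>s\<le>r. (1 - b) * b ^ (n - s)) = b ^ (n - r) - b ^ Suc n"
  using assms
proof (induction r)
  case (Suc r)
  then have "b ^ (n - r) = b * b ^ (n - Suc r)"
    by (metis Suc_diff_Suc Suc_le_lessD power_Suc)
  with Suc show ?case by (simp add: algebra_simps)
qed (simp add: algebra_simps)

lemma ema_const: "ema b n (\<lambda>_. c) = (1 - b ^ Suc n) * c"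
  unfolding ema_def using sum_geometric_weights[of n n b] by (simp flip: sum_distrib_right)

lemma one_minus_power_Suc_pos:
  fixes b :: real
  assumes "0 \<le> b" "b < 1"
  shows "0 < 1 - b ^ Suc n"
  using assms power_less_one_iff[of b "Suc n"] by simp

lemma ema_tail_sum_eq:
  fixes w :: "nat \<Rightarrow> real"
  shows "ema b n (\<lambda>s. \<Sum>r\<in>{s..<n}. w r) = (\<Sum>r<n. w r * (b ^ (n - r) - b ^ Suc n))"
proof -
  have swap: "(\<Sum>s\<le>n. c s * (\<Sum>r\<in>{s..<n}. w r)) = (\<Sum>r<n. w r * (\<Sum>s\<le>r. c s))" for c :: "nat \<Rightarrow> real"
  proof (induction n)
    case (Suc n)
    have "(\<Sum>s\<le>Suc n. c s * (\<Sum>r\<in>{s..<Suc n}. w r))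
        = (\<Sum>s\<le>n. c s * (\<Sum>r\<in>{s..<n}. w r)) + w n * (\<Sum>s\<le>n. c s)"
      by (simp add: distrib_left sum.distrib sum_distrib_left mult.commute)
    with Suc.IH show ?case by simp
  qed simp
  show ?thesis
    unfolding ema_def swap by (intro sum.cong refl) (simp add: sum_geometric_weights)
qed

lemma ema_tail_sum_le:
  fixes b :: real
  assumes b: "0 \<le> b" "b < 1"
  shows "ema b n (\<lambda>s. \<Sum>r\<in>{s..<n}. (1 - b) / (1 - b ^ Suc r) / sqrt (real r + 1))
     \<le> 2 * (1 - b ^ Suc n) / sqrt (real n + 1)"
proof -
  have "(1 - b) / (1 - b ^ Suc r) / sqrt (real r + 1) * (b ^ (n - r) - b ^ Suc n)
      = (1 - b) * (b ^ (n - r) / sqrt (real r + 1))" if "r < n" for r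
  proof -
    have "b ^ (n - r) - b ^ Suc n = b ^ (n - r) * (1 - b ^ Suc r)"
      using that by (simp add: algebra_simps flip: power_add)
    then show ?thesis
      using one_minus_power_Suc_pos[OF b, of r] by simp
  qed
  then have "ema b n (\<lambda>s. \<Sum>r\<in>{s..<n}. (1 - b) / (1 - b ^ Suc r) / sqrt (real r + 1))
      = (1 - b) * (\<Sum>r<n. b ^ (n - r) / sqrt (real r + 1))"
    unfolding ema_tail_sum_eq sum_distrib_left by (intro sum.cong) auto
  also have "\<dots> \<le> (1 - b) * (\<Sum>r\<le>n. b ^ (n - r) / sqrt (real r + 1))"
    using b by (intro mult_left_mono sum_mono2) auto
  also have "\<dots> \<le> (1 - b) * (2 * (1 - b ^ Suc n) / ((1 - b) * sqrt (real n + 1)))"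
    using sum_power_div_sqrt_le[OF b] b by (intro mult_left_mono) auto
  finally show ?thesis using b by simp
qed

lemma ema_square_lag_le:
  fixes b :: real
  assumes b: "0 \<le> b" "b < 1"
  shows "ema b n (\<lambda>s. (real (n - s))\<^sup>2) \<le> (1 - b ^ Suc n) * (b * (1 + b) / (1 - b)\<^sup>2)"
proof -
  have "ema b n (\<lambda>s. (real (n - s))\<^sup>2) = (1 - b) * (\<Sum>k<Suc n. b ^ k * (real k)\<^sup>2)"
    unfolding ema_def lessThan_Suc_atMost sum_distrib_left
    by (rule sum.reindex_bij_witness[where i="\<lambda>k. n - k" and j="\<lambda>k. n - k"]) (auto simp: mult.assoc)
  also have "\<dots> = (1 - b)^3 * (\<Sum>k<Suc n. b ^ k * (real k)\<^sup>2) / (1 - b)\<^sup>2"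
    using b by (simp add: power2_eq_square power3_eq_cube)
  also have "\<dots> \<le> (b * (1 + b) - b ^ Suc n * (b * (1 + b))) / (1 - b)\<^sup>2"
    unfolding sum_power_mult_square_eq using b by (intro divide_right_mono) (auto simp: mult_left_mono)
  finally show ?thesis by (simp add: algebra_simps)
qed

lemma ema_tail_sum_square_le:
  fixes b :: real and x :: "nat \<Rightarrow> real"
  assumes b: "0 \<le> b" "b < 1" and x: "\<And>r. 0 \<le> x r" "\<And>r. x r \<le> 1 / sqrt (real r + 1)"
  shows "ema b n (\<lambda>s. (\<Sum>r\<in>{s..<n}. x r)\<^sup>2) \<le> (1 - b ^ Suc n) * (16 * b / ((1 - b)\<^sup>2 * (real n + 1)))"
proof -
  have "(\<Sum>r\<in>{s..<n}. x r)\<^sup>2 \<le> 8 / (real n + 1) * (real (n - s))\<^sup>2" if "s \<le> n" for s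
  proof -
    have "(\<Sum>r\<in>{s..<n}. x r) \<le> 2 * sqrt 2 * (real n - real s) / sqrt (real n + 1)"
      using sum_mono[of "{s..<n}" x, OF x(2)] sum_inv_sqrt_le[OF that] by linarith
    then have "(\<Sum>r\<in>{s..<n}. x r)\<^sup>2 \<le> (2 * sqrt 2 * (real n - real s) / sqrt (real n + 1))\<^sup>2"
      using x(1) by (intro power_mono sum_nonneg) auto
    then show ?thesis
      using that by (simp add: power_divide power_mult_distrib)
  qed
  then have "ema b n (\<lambda>s. (\<Sum>r\<in>{s..<n}. x r)\<^sup>2) \<le> ema b n (\<lambda>s. 8 / (real n + 1) * (real (n - s))\<^sup>2)"
    using b by (intro ema_mono) auto
  also have "\<dots> = 8 / (real n + 1) * ema b n (\<lambda>s. (real (n - s))\<^sup>2)"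
    by (rule ema_scale)
  also have "\<dots> \<le> 8 / (real n + 1) * ((1 - b ^ Suc n) * (b * (1 + b) / (1 - b)\<^sup>2))"
    using ema_square_lag_le[OF b] by (intro mult_left_mono) auto
  also have "\<dots> \<le> 8 / (real n + 1) * ((1 - b ^ Suc n) * (b * 2 / (1 - b)\<^sup>2))"
  proof -
    have "b * (1 + b) \<le> b * 2" using b by (intro mult_left_mono) auto
    then show ?thesis
      using b one_minus_power_Suc_pos[OF b, of n] by (intro mult_left_mono divide_right_mono) auto
  qed
  also have "\<dots> = (1 - b ^ Suc n) * (16 * b / ((1 - b)\<^sup>2 * (real n + 1)))"
    by (simp add: field_simps)
  finally show ?thesis .
qed

section \<open>Lower bound for the bias-corrected direction\<close>

lemma mult_ge_of_abs_diff_le: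
  fixes g m A :: real
  assumes "\<bar>m - g\<bar> \<le> A"
  shows "\<bar>g\<bar> * (\<bar>g\<bar> - A) \<le> g * m"
proof -
  have "\<bar>g * (m - g)\<bar> \<le> \<bar>g\<bar> * A" using assms by (simp add: abs_mult mult_left_mono)
  then have "- (\<bar>g\<bar> * A) \<le> g * (m - g)" by linarith
  moreover have "g * m = \<bar>g\<bar> * \<bar>g\<bar> + g * (m - g)" by (simp add: algebra_simps)
  moreover have "\<bar>g\<bar> * (\<bar>g\<bar> - A) = \<bar>g\<bar> * \<bar>g\<bar> - \<bar>g\<bar> * A" by (simp add: algebra_simps)
  ultimately show ?thesis by linarith
qed

lemma scaled_gap_mult_le:
  fixes h A D c Y :: real
  assumes c: "0 < c" "c \<le> 1" and D: "0 \<le> D" and Y: "A + c * D \<le> Y" "0 \<le> Y" and h: "Y \<le> h"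
  shows "c * (h - Y) * (h + D) \<le> h * (h - A)"
proof -
  have "(1 - c) * Y \<le> (1 - c) * h" using h c by (intro mult_left_mono) auto
  moreover have "(1 - c) * Y + c * Y = Y" by (simp add: algebra_simps)
  ultimately have "0 \<le> (1 - c) * h + c * Y - A - c * D" using Y(1) by linarith
  then have "0 \<le> h * ((1 - c) * h + c * Y - A - c * D) + c * Y * D"
    using c D Y h by (intro add_nonneg_nonneg mult_nonneg_nonneg) auto
  then show ?thesis by (simp add: algebra_simps)
qed

lemma neg_quotient_lower_bound:
  fixes h P S A c Y :: real
  assumes c: "0 < c" "c \<le> 1" and Y: "A \<le> c\<^sup>2 * Y"
    and P: "h * (h - A) \<le> P" "P < 0" and S: "c * h \<le> S" and "0 \<le> h"
  shows "c * (h - Y) \<le> P / S"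
proof -
  have h: "h \<noteq> 0" using P by auto
  then have "0 < h" using \<open>0 \<le> h\<close> by simp
  have "c * c * h \<le> 1 * h"
    using c \<open>0 < h\<close> by (intro mult_right_mono mult_le_one) auto
  then have "c * (c * (h - Y)) \<le> h - A"
    using Y by (simp add: power2_eq_square algebra_simps)
  then have "c * (h - Y) \<le> (h - A) / c"
    using c by (simp add: pos_le_divide_eq mult.commute)
  also have "\<dots> = h * (h - A) / (c * h)"
    using h c by simp
  also have "\<dots> \<le> P / (c * h)"
    using P \<open>0 < h\<close> c by (intro divide_right_mono) auto
  also have "\<dots> \<le> P / S"
  proof (rule divide_left_mono_neg)
    have "0 < c * h" using c \<open>0 < h\<close> by simp
    then show "0 < c * h * S" using S by simp
  qed (use P S in auto)
  finally show ?thesis .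
qed

lemma quotient_lower_bound:
  fixes g m S A D c Y :: real
  assumes c: "0 < c" "c \<le> 1" and m: "\<bar>m - g\<bar> \<le> A"
    and S: "c * \<bar>g\<bar> \<le> S" "S \<le> \<bar>g\<bar> + D" and D: "0 \<le> D"
    and Y: "A + c * D \<le> Y" "A \<le> c\<^sup>2 * Y"
  shows "c * (\<bar>g\<bar> - Y) \<le> g * (m / S)"
proof -
  let ?h = "\<bar>g\<bar>"
  have cD: "0 \<le> c * D" using c D by simp
  have Y0: "0 \<le> Y" using Y(1) cD m by linarith
  have gm: "?h * (?h - A) \<le> g * m" using m by (rule mult_ge_of_abs_diff_le)
  have "0 \<le> c * ?h" using c by simp
  then have "0 \<le> S" using S(1) by linarith
  then consider "S = 0" | "0 < S" "Y \<le> ?h" | "0 < S" "?h < Y" "0 \<le> g * m" | "0 < S" "g * m < 0"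
    by (cases "S = 0"; cases "Y \<le> ?h"; cases "0 \<le> g * m") auto
  then show ?thesis
  proof cases
    case 1
    then have "g = 0" using S(1) c by (simp add: mult_le_0_iff)
    then show ?thesis using c Y0 by simp
  next
    case 2
    then have "c * (?h - Y) \<le> ?h * (?h - A) / (?h + D)"
      using scaled_gap_mult_le[OF c D Y(1) Y0] S by (simp add: pos_le_divide_eq)
    also have "\<dots> \<le> ?h * (?h - A) / S"
      using 2 S Y cD by (intro divide_left_mono mult_nonneg_nonneg) auto
    also have "\<dots> \<le> g * (m / S)"
      using gm 2 by (simp add: divide_right_mono)
    finally show ?thesis .
  next
    case 3
    then have "c * (?h - Y) \<le> 0" using c by (simp add: mult_nonneg_nonpos)
    moreover have "0 \<le> g * (m / S)" using 3 by simp
    ultimately show ?thesis by linarith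
  next
    case 4
    then show ?thesis
      using neg_quotient_lower_bound[OF c Y(2) gm _ S(1) abs_ge_zero] by simp
  qed
qed

lemma bias_corrected_ema_dist_le:
  assumes b: "0 \<le> b" "b < 1" and E: "\<And>s. s \<le> n \<Longrightarrow> \<bar>y s - y n\<bar> \<le> E s"
    and Z: "ema b n E \<le> (1 - b ^ Suc n) * Z"
  shows "\<bar>1 / (1 - b ^ Suc n) * ema b n y - y n\<bar> \<le> Z"
proof -
  let ?W = "1 - b ^ Suc n"
  have W: "0 < ?W" using one_minus_power_Suc_pos[OF b] .
  have "\<bar>ema b n y - ?W * y n\<bar> = \<bar>ema b n (\<lambda>s. y s - y n)\<bar>"
    by (simp add: ema_diff ema_const)
  also have "\<dots> \<le> ema b n (\<lambda>s. \<bar>y s - y n\<bar>)"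
    using b by (intro abs_ema_le) auto
  also have "\<dots> \<le> ema b n E"
    using b E by (intro ema_mono) auto
  also have "\<dots> \<le> ?W * Z"
    by (rule Z)
  finally have "\<bar>ema b n y - ?W * y n\<bar> / ?W \<le> Z"
    using W by (simp add: divide_le_eq mult.commute)
  moreover have "1 / ?W * ema b n y - y n = (ema b n y - ?W * y n) / ?W"
    using W by (simp add: field_simps)
  ultimately show ?thesis
    using W by simp
qed

lemma sqrt_ema_square_add_le:
  assumes b: "0 \<le> b" "b \<le> 1"
  shows "sqrt (ema b n (\<lambda>s. (u s + v s)\<^sup>2)) \<le> sqrt (ema b n (\<lambda>s. (u s)\<^sup>2)) + sqrt (ema b n (\<lambda>s. (v s)\<^sup>2))"
proof -
  define w where "w s = sqrt ((1 - b) * b ^ (n - s))" for s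
  have L2: "sqrt (ema b n (\<lambda>s. (f s)\<^sup>2)) = L2_set (\<lambda>s. w s * f s) {..n}" for f
    unfolding ema_def L2_set_def w_def using b by (simp add: power_mult_distrib)
  show ?thesis
    unfolding L2 distrib_left by (rule L2_set_triangle_ineq)
qed

lemma sqrt_bias_corrected_ema_square_ge:
  assumes b: "0 \<le> b" "b < 1"
  shows "sqrt (1 - b) * \<bar>y n\<bar> \<le> sqrt (1 / (1 - b ^ Suc n) * ema b n (\<lambda>s. (y s)\<^sup>2))"
proof -
  have W: "0 < 1 - b ^ Suc n" "1 - b ^ Suc n \<le> 1"
    using one_minus_power_Suc_pos[OF b] b by auto
  have "(1 - b) * (y n)\<^sup>2 \<le> ema b n (\<lambda>s. (y s)\<^sup>2)"
    using b by (intro ema_last_le) auto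
  also have "\<dots> \<le> 1 / (1 - b ^ Suc n) * ema b n (\<lambda>s. (y s)\<^sup>2)"
    using W ema_nonneg[of b n "\<lambda>s. (y s)\<^sup>2"] b by (simp add: le_divide_eq mult_left_le)
  finally have "sqrt ((1 - b) * (y n)\<^sup>2) \<le> sqrt (1 / (1 - b ^ Suc n) * ema b n (\<lambda>s. (y s)\<^sup>2))"
    by (rule real_sqrt_le_mono)
  then show ?thesis by (simp add: real_sqrt_mult)
qed

lemma sqrt_bias_corrected_ema_square_le:
  assumes b: "0 \<le> b" "b < 1" and E: "\<And>s. s \<le> n \<Longrightarrow> \<bar>y s - y n\<bar> \<le> E s"
    and Z: "ema b n (\<lambda>s. (E s)\<^sup>2) \<le> (1 - b ^ Suc n) * Z\<^sup>2" "0 \<le> Z"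
  shows "sqrt (1 / (1 - b ^ Suc n) * ema b n (\<lambda>s. (y s)\<^sup>2)) \<le> \<bar>y n\<bar> + Z"
proof -
  let ?W = "1 - b ^ Suc n"
  have W: "0 < ?W" using one_minus_power_Suc_pos[OF b] .
  have "sqrt (ema b n (\<lambda>s. (y s)\<^sup>2)) = sqrt (ema b n (\<lambda>s. (y n + (y s - y n))\<^sup>2))"
    by simp
  also have "\<dots> \<le> sqrt (ema b n (\<lambda>_. (y n)\<^sup>2)) + sqrt (ema b n (\<lambda>s. (y s - y n)\<^sup>2))"
    using b by (intro sqrt_ema_square_add_le) auto
  also have "\<dots> \<le> sqrt (?W * (y n)\<^sup>2) + sqrt (?W * Z\<^sup>2)"
  proof -
    have "(y s - y n)\<^sup>2 \<le> (E s)\<^sup>2" if "s \<le> n" for s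
      using power_mono[OF E[OF that] abs_ge_zero, of 2] by simp
    then have "ema b n (\<lambda>s. (y s - y n)\<^sup>2) \<le> ema b n (\<lambda>s. (E s)\<^sup>2)"
      using b by (intro ema_mono) auto
    then show ?thesis
      using Z(1) by (simp add: ema_const real_sqrt_le_mono)
  qed
  also have "\<dots> = sqrt ?W * (\<bar>y n\<bar> + Z)"
    using Z by (simp add: real_sqrt_mult distrib_left)
  finally show ?thesis
    using W by (simp add: real_sqrt_mult real_sqrt_divide divide_le_eq mult.commute)
qed

lemma ema_ratio_constants_le:
  fixes b2 X K :: real
  assumes b2: "0 < b2" "b2 < 1" and X: "0 \<le> X" and K: "4 / (1 - b2) \<le> K"
  shows "2 * X + sqrt (1 - b2) * (4 * sqrt b2 * X / (1 - b2)) \<le> K * X" "2 * X \<le> (1 - b2) * (K * X)"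
proof -
  have "2 * (sqrt (1 - b2) * sqrt b2) \<le> (sqrt (1 - b2))\<^sup>2 + (sqrt b2)\<^sup>2"
    using sum_squares_bound[of "sqrt (1 - b2)" "sqrt b2"] by simp
  then have "2 * (sqrt (1 - b2) * sqrt b2) \<le> 1" using b2 by simp
  then have "2 * (2 * (sqrt (1 - b2) * sqrt b2)) * X / (1 - b2) \<le> 2 * 1 * X / (1 - b2)"
    using X b2 by (intro divide_right_mono mult_right_mono mult_left_mono) auto
  moreover have "2 * X \<le> 2 * X / (1 - b2)"
    using b2 X by (simp add: le_divide_eq mult_left_le)
  moreover have "4 * X / (1 - b2) \<le> K * X"
    using mult_right_mono[OF K X] by simp
  moreover have "sqrt (1 - b2) * (4 * sqrt b2 * X / (1 - b2)) = 2 * (2 * (sqrt (1 - b2) * sqrt b2)) * X / (1 - b2)"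
    by (simp add: algebra_simps)
  moreover have "2 * X / (1 - b2) + 2 * X / (1 - b2) = 4 * X / (1 - b2)"
    by (simp add: add_divide_distrib[symmetric])
  ultimately show "2 * X + sqrt (1 - b2) * (4 * sqrt b2 * X / (1 - b2)) \<le> K * X"
    by linarith
  have "4 \<le> (1 - b2) * K" using K b2 by (simp add: divide_le_eq mult.commute)
  then have "4 * X \<le> (1 - b2) * K * X" using X by (rule mult_right_mono)
  then show "2 * X \<le> (1 - b2) * (K * X)" using X by simp
qed

lemma ema_ratio_lower_bound:
  fixes y E :: "nat \<Rightarrow> real" and b1 b2 X K :: real
  assumes b1: "0 \<le> b1" "b1 < 1" and b2: "0 < b2" "b2 < 1" and X: "0 \<le> X" and K: "4 / (1 - b2) \<le> K"
    and E: "\<And>s. s \<le> n \<Longrightarrow> \<bar>y s - y n\<bar> \<le> E s"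
    and E1: "ema b1 n E \<le> (1 - b1 ^ Suc n) * (2 * X)"
    and E2: "ema b2 n (\<lambda>s. (E s)\<^sup>2) \<le> (1 - b2 ^ Suc n) * (16 * b2 * X\<^sup>2 / (1 - b2)\<^sup>2)"
  shows "sqrt (1 - b2) * (\<bar>y n\<bar> - K * X)
    \<le> y n * ((1 / (1 - b1 ^ Suc n) * ema b1 n y) / sqrt (1 / (1 - b2 ^ Suc n) * ema b2 n (\<lambda>s. (y s)\<^sup>2)))"
proof -
  define c where "c = sqrt (1 - b2)"
  define D where "D = 4 * sqrt b2 * X / (1 - b2)"
  have c: "0 < c" "c \<le> 1" "c\<^sup>2 = 1 - b2" unfolding c_def using b2 by auto
  have D: "0 \<le> D" "D\<^sup>2 = 16 * b2 * X\<^sup>2 / (1 - b2)\<^sup>2"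
    unfolding D_def using b2 X by (auto simp: power_divide power_mult_distrib)
  have Y: "2 * X + c * D \<le> K * X" "2 * X \<le> c\<^sup>2 * (K * X)"
    unfolding c_def D_def using ema_ratio_constants_le[OF b2 X K] b2 by simp_all
  have b2': "0 \<le> b2" using b2 by simp
  have m: "\<bar>1 / (1 - b1 ^ Suc n) * ema b1 n y - y n\<bar> \<le> 2 * X"
    using b1 E E1 by (rule bias_corrected_ema_dist_le)
  have S_le: "sqrt (1 / (1 - b2 ^ Suc n) * ema b2 n (\<lambda>s. (y s)\<^sup>2)) \<le> \<bar>y n\<bar> + D"
    using b2' b2(2) E E2[folded D(2)] D(1) by (rule sqrt_bias_corrected_ema_square_le)
  have S_ge: "c * \<bar>y n\<bar> \<le> sqrt (1 / (1 - b2 ^ Suc n) * ema b2 n (\<lambda>s. (y s)\<^sup>2))"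
    unfolding c_def using b2' b2(2) by (rule sqrt_bias_corrected_ema_square_ge)
  show ?thesis
    using quotient_lower_bound[OF c(1,2) m S_ge S_le D(1) Y] unfolding c_def .
qed

section \<open>Number of coordinates kept by FLT\<close>

lemma block_rank_less:
  fixes z :: "real^'n::{finite,linorder}"
  assumes "\<bar>z$j\<bar> < \<bar>z$i\<bar> \<or> (\<bar>z$i\<bar> = \<bar>z$j\<bar> \<and> i < j)" and "blk i = blk j"
  shows "block_rank blk z i < block_rank blk z j"
proof -
  let ?before = "\<lambda>j. {k. blk k = blk j \<and> (\<bar>z$j\<bar> < \<bar>z$k\<bar> \<or> (\<bar>z$k\<bar> = \<bar>z$j\<bar> \<and> k < j))}"
  have "?before i \<subseteq> ?before j" using assms by (auto intro: less_trans)
  moreover have "i \<in> ?before j" "i \<notin> ?before i" using assms by auto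
  ultimately have "card (?before i) < card (?before j)"
    by (intro psubset_card_mono) auto
  then show ?thesis unfolding block_rank_def .
qed

lemma inj_on_block_rank:
  fixes z :: "real^'n::{finite,linorder}"
  shows "inj_on (block_rank blk z) {j. blk j = k}"
proof (rule inj_onI, rule ccontr)
  fix i j assume ij: "i \<in> {j. blk j = k}" "j \<in> {j. blk j = k}"
    and eq: "block_rank blk z i = block_rank blk z j" and "i \<noteq> j"
  then have "(\<bar>z$j\<bar> < \<bar>z$i\<bar> \<or> (\<bar>z$i\<bar> = \<bar>z$j\<bar> \<and> i < j)) \<or> (\<bar>z$i\<bar> < \<bar>z$j\<bar> \<or> (\<bar>z$j\<bar> = \<bar>z$i\<bar> \<and> j < i))"
    by (metis linorder_neqE linorder_neqE_linordered_idom)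
  then show False
    using block_rank_less[of z _ _ blk] ij eq by fastforce
qed

lemma card_block_rank_less_le:
  fixes z :: "real^'n::{finite,linorder}"
  shows "card {j. blk j = k \<and> block_rank blk z j < N} \<le> N"
proof -
  have "card {j. blk j = k \<and> block_rank blk z j < N} \<le> card {..<N}"
    by (rule card_inj_on_le[OF inj_on_subset[OF inj_on_block_rank[of blk z k]]]) auto
  then show ?thesis by simp
qed

lemma sum_block_size:
  fixes blk :: "'n::finite \<Rightarrow> nat"
  assumes "\<And>j. blk j < B"
  shows "(\<Sum>k<B. block_size blk k) = CARD('n)"
proof -
  have "UNIV = (\<Union>k<B. {j. blk j = k})" using assms by auto
  then have "CARD('n) = card (\<Union>k<B. {j. blk j = k})" by simp
  also have "\<dots> = (\<Sum>k<B. card {j. blk j = k})"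
    by (rule card_UN_disjoint) auto
  finally show ?thesis unfolding block_size_def by simp
qed

lemma FLT_nth:
  "FLT blk a z $ j = (if block_rank blk z j < nat \<lceil>real (block_size blk (blk j)) * a\<rceil> then 1 else 0)"
  unfolding FLT_def by simp

lemma sum_FLT_le:
  fixes z :: "real^'n::{finite,linorder}"
  assumes blk: "\<And>j. blk j < B" and a: "0 \<le> a"
  shows "(\<Sum>j\<in>UNIV. FLT blk a z $ j) \<le> real CARD('n) * a + real B"
proof -
  define N where "N k = nat \<lceil>real (block_size blk k) * a\<rceil>" for k
  have "(\<Sum>j\<in>UNIV. FLT blk a z $ j) = real (card {j. block_rank blk z j < N (blk j)})"
    unfolding FLT_nth N_def by (simp add: of_bool_def[symmetric])
  also have "card {j. block_rank blk z j < N (blk j)} = card (\<Union>k<B. {j. blk j = k \<and> block_rank blk z j < N k})"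
    using blk by (intro arg_cong[where f=card]) auto
  also have "\<dots> \<le> (\<Sum>k<B. card {j. blk j = k \<and> block_rank blk z j < N k})"
    by (rule card_UN_le) simp
  also have "\<dots> \<le> (\<Sum>k<B. N k)"
    by (intro sum_mono card_block_rank_less_le)
  also have "real (\<Sum>k<B. N k) \<le> (\<Sum>k<B. real (block_size blk k) * a + 1)"
  proof (unfold of_nat_sum, intro sum_mono)
    fix k
    show "real (N k) \<le> real (block_size blk k) * a + 1"
      unfolding N_def using a ceiling_correct[of "real (block_size blk k) * a"] by simp
  qed
  also have "\<dots> = real CARD('n) * a + real B"
  proof -
    have "(\<Sum>k<B. block_size blk k) = CARD('n)" using blk by (rule sum_block_size)
    then show ?thesis by (simp add: sum.distrib flip: sum_distrib_right of_nat_sum)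
  qed
  finally show ?thesis by simp
qed

section \<open>Step lengths of MoFO\<close>

lemma beta_bounds:
  fixes b1 b2 :: real
  assumes "0 \<le> b1" "b1 < sqrt b2" "b2 < 1"
  shows "0 < b2" "b1 < 1"
proof -
  have "0 < sqrt b2" "sqrt b2 < 1" using assms by (linarith, simp)
  then show "0 < b2" "b1 < 1" using assms by (simp, linarith)
qed

definition momentum_ratio_bound :: "real \<Rightarrow> real \<Rightarrow> real" where
  "momentum_ratio_bound b1 b2 = 1 / (sqrt (1 - b2) * (1 - b1 / sqrt b2))"

lemma momentum_ratio_bound_pos:
  assumes "0 \<le> b1" "b1 < sqrt b2" "b2 < 1"
  shows "0 < momentum_ratio_bound b1 b2"
proof -
  have "0 < sqrt b2" using assms by linarith
  then show ?thesis
    unfolding momentum_ratio_bound_def using assms by (simp add: divide_less_eq)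
qed

(* With r = b1 / sqrt b2 < 1, the old momentum is charged to the fraction r of
   sqrt (b2 v + (1 - b2) g^2) and the new gradient to the fraction 1 - r. *)
lemma momentum_ratio_step:
  fixes m v g b1 b2 :: real
  assumes b: "0 \<le> b1" "b1 < sqrt b2" "b2 < 1" and v: "0 \<le> v"
    and m: "\<bar>m\<bar> \<le> (1 - b1) * momentum_ratio_bound b1 b2 * sqrt v"
  shows "\<bar>b1 * m + (1 - b1) * g\<bar> \<le> (1 - b1) * momentum_ratio_bound b1 b2 * sqrt (b2 * v + (1 - b2) * g\<^sup>2)"
proof -
  define M where "M = momentum_ratio_bound b1 b2"
  define r where "r = b1 / sqrt b2"
  define V where "V = b2 * v + (1 - b2) * g\<^sup>2"
  have sb: "0 < sqrt b2" "sqrt b2 < 1" using b by (linarith, simp)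
  have b1: "b1 < 1" using beta_bounds[OF b] by simp
  have r: "0 \<le> r" "r < 1" unfolding r_def using b sb by (auto simp: divide_less_eq)
  have M: "0 < M" unfolding M_def using b by (rule momentum_ratio_bound_pos)
  have "b2 * v \<le> V" "(1 - b2) * g\<^sup>2 \<le> V" unfolding V_def using b sb v by auto
  then have V: "sqrt b2 * sqrt v \<le> sqrt V" "sqrt (1 - b2) * \<bar>g\<bar> \<le> sqrt V"
    using real_sqrt_le_mono by (fastforce simp: real_sqrt_mult)+
  have "\<bar>b1 * m + (1 - b1) * g\<bar> \<le> b1 * \<bar>m\<bar> + (1 - b1) * \<bar>g\<bar>"
    using abs_triangle_ineq[of "b1 * m" "(1 - b1) * g"] b sb by (simp add: abs_mult)
  also have "\<dots> \<le> b1 * ((1 - b1) * M * sqrt v) + (1 - b1) * \<bar>g\<bar>"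
    using m b unfolding M_def by (simp add: mult_left_mono)
  also have "\<dots> = (1 - b1) * M * (r * (sqrt b2 * sqrt v) + (1 - r) * (sqrt (1 - b2) * \<bar>g\<bar>))"
    unfolding M_def momentum_ratio_bound_def r_def using sb b by (simp add: field_simps)
  also have "\<dots> \<le> (1 - b1) * M * (r * sqrt V + (1 - r) * sqrt V)"
    using V r M b1 by (intro mult_left_mono add_mono) auto
  finally show ?thesis
    unfolding M_def V_def by (simp add: algebra_simps)
qed

lemma abs_ema_le_momentum_ratio_bound:
  assumes "0 \<le> b1" "b1 < sqrt b2" "b2 < 1"
  shows "\<bar>ema b1 n y\<bar> \<le> (1 - b1) * momentum_ratio_bound b1 b2 * sqrt (ema b2 n (\<lambda>s. (y s)\<^sup>2))"
proof (induction n)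
  case 0
  show ?case
    using momentum_ratio_step[OF assms order_refl, of 0 "y 0"] by (simp add: ema_0)
next
  case (Suc n)
  have "0 \<le> ema b2 n (\<lambda>s. (y s)\<^sup>2)"
    using beta_bounds[OF assms] assms by (intro ema_nonneg) auto
  then show ?case
    using momentum_ratio_step[OF assms _ Suc.IH] by (simp add: ema_Suc)
qed

lemma abs_bias_corrected_quotient_le:
  fixes m v W1 W2 Q :: real
  assumes v: "0 \<le> v" and m: "\<bar>m\<bar> \<le> Q * sqrt v" and Q: "0 \<le> Q"
    and W: "0 < W1" "0 < W2" "W2 \<le> 1"
  shows "\<bar>(1 / W1 * m) / sqrt (1 / W2 * v)\<bar> \<le> Q / W1"
proof (cases "v = 0")
  case False
  then have sv: "0 < sqrt v" using v by simp
  have "sqrt v \<le> sqrt (1 / W2 * v)"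
    using W v by (intro real_sqrt_le_mono) (simp add: field_simps mult_left_le_one_le)
  then have "\<bar>(1 / W1 * m) / sqrt (1 / W2 * v)\<bar> \<le> (\<bar>m\<bar> / W1) / sqrt v"
    using W sv by (simp add: abs_mult abs_divide divide_left_mono)
  also have "\<dots> \<le> (Q * sqrt v / W1) / sqrt v"
    using m W sv by (intro divide_right_mono) auto
  finally show ?thesis using sv by simp
qed (use W Q in simp)

lemma norm_le_masked:
  fixes x f :: "real^'n::finite"
  assumes f: "\<And>j. f $ j = 0 \<or> f $ j = 1" and x: "\<And>j. \<bar>x $ j\<bar> \<le> Q * f $ j" and Q: "0 \<le> Q"
  shows "norm x \<le> Q * sqrt (\<Sum>j\<in>UNIV. f $ j)"
proof -
  have "(x $ j)\<^sup>2 \<le> Q\<^sup>2 * f $ j" for j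
    using power_mono[OF x[of j] abs_ge_zero, of 2] f[of j] by (auto simp: power_mult_distrib)
  then have "norm x \<le> sqrt (\<Sum>j\<in>UNIV. Q\<^sup>2 * f $ j)"
    unfolding norm_vec_def L2_set_def by (intro real_sqrt_le_mono sum_mono) simp
  then show ?thesis
    using Q by (simp add: real_sqrt_mult flip: sum_distrib_left)
qed

context
  fixes G :: "real^'n::{finite,linorder} \<Rightarrow> real^'n::{finite,linorder}"
    and blk :: "'n::{finite,linorder} \<Rightarrow> nat"
    and a b1 b2 :: real and eta :: "nat \<Rightarrow> real" and init :: "real^'n::{finite,linorder}"
begin

abbreviation "mofoT \<equiv> mofo_theta G blk a b1 b2 eta init"
abbreviation "mofoM \<equiv> mofo_m G blk a b1 b2 eta init"
abbreviation "mofoV \<equiv> mofo_v G blk a b1 b2 eta init"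

lemma mofo_0: "mofoM 0 = 0" "mofoV 0 = 0"
  unfolding mofo_m_def mofo_v_def by simp_all

lemma mofo_Suc:
  "mofoM (Suc t) = b1 *\<^sub>R mofoM t + (1 - b1) *\<^sub>R G (mofoT t)"
  "mofoV (Suc t) = b2 *\<^sub>R mofoV t + (1 - b2) *\<^sub>R (\<chi> i. (G (mofoT t) $ i)\<^sup>2)"
  "mofoT (Suc t) = mofoT t - (\<chi> i. eta (Suc t) * ((((1 / (1 - b1 ^ Suc t)) *\<^sub>R mofoM (Suc t)) $ i)
      * (FLT blk a (mofoM (Suc t)) $ i)) / sqrt (((1 / (1 - b2 ^ Suc t)) *\<^sub>R mofoV (Suc t)) $ i))"
  unfolding mofo_theta_def mofo_m_def mofo_v_def
  by (simp_all add: Let_def split: prod.split)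

lemma mofo_m_eq_ema: "mofoM (Suc n) $ i = ema b1 n (\<lambda>s. G (mofoT s) $ i)"
  by (induction n) (simp_all add: mofo_Suc mofo_0 ema_0 ema_Suc)

lemma mofo_v_eq_ema: "mofoV (Suc n) $ i = ema b2 n (\<lambda>s. (G (mofoT s) $ i)\<^sup>2)"
  by (induction n) (simp_all add: mofo_Suc mofo_0 ema_0 ema_Suc)

lemma abs_mofo_direction_le:
  assumes b: "0 \<le> b1" "b1 < sqrt b2" "b2 < 1"
  shows "\<bar>((1 / (1 - b1 ^ Suc r)) *\<^sub>R mofoM (Suc r)) $ j / sqrt (((1 / (1 - b2 ^ Suc r)) *\<^sub>R mofoV (Suc r)) $ j)\<bar>
    \<le> (1 - b1) * momentum_ratio_bound b1 b2 / (1 - b1 ^ Suc r)"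
proof -
  have b': "0 \<le> b1" "b1 < 1" "0 \<le> b2" "b2 < 1" using b beta_bounds[OF b] by auto
  show ?thesis
    unfolding vector_scaleR_component real_scaleR_def mofo_m_eq_ema mofo_v_eq_ema
    using one_minus_power_Suc_pos[OF b'(1,2)] one_minus_power_Suc_pos[OF b'(3,4)] b'
      momentum_ratio_bound_pos[OF b]
    by (intro abs_bias_corrected_quotient_le ema_nonneg abs_ema_le_momentum_ratio_bound[OF b])
      (auto simp: power_le_one)
qed

lemma mofo_step_norm_le:
  assumes b: "0 \<le> b1" "b1 < sqrt b2" "b2 < 1" and blk: "\<And>j. blk j < B" and a: "0 \<le> a"
    and eta: "0 \<le> eta (Suc r)"
  shows "norm (mofoT (Suc r) - mofoT r)
    \<le> eta (Suc r) * ((1 - b1) / (1 - b1 ^ Suc r)) * momentum_ratio_bound b1 b2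
       * sqrt (real CARD('n) * a + real B)"
proof -
  define Q where "Q = eta (Suc r) * ((1 - b1) / (1 - b1 ^ Suc r)) * momentum_ratio_bound b1 b2"
  define f where "f = FLT blk a (mofoM (Suc r))"
  have W: "0 < 1 - b1 ^ Suc r" using one_minus_power_Suc_pos b beta_bounds[OF b] by simp
  have Q: "0 \<le> Q"
    unfolding Q_def using W momentum_ratio_bound_pos[OF b] eta beta_bounds[OF b]
    by (intro mult_nonneg_nonneg divide_nonneg_pos) auto
  have f: "f $ j = 0 \<or> f $ j = 1" for j unfolding f_def FLT_nth by simp
  have "\<bar>(mofoT r - mofoT (Suc r)) $ j\<bar> \<le> Q * f $ j" for j
  proof -
    define q where "q = ((1 / (1 - b1 ^ Suc r)) *\<^sub>R mofoM (Suc r)) $ j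
      / sqrt (((1 / (1 - b2 ^ Suc r)) *\<^sub>R mofoV (Suc r)) $ j)"
    have "eta (Suc r) * \<bar>q\<bar> \<le> eta (Suc r) * ((1 - b1) * momentum_ratio_bound b1 b2 / (1 - b1 ^ Suc r))"
      unfolding q_def using abs_mofo_direction_le[OF b] eta by (rule mult_left_mono)
    also have "\<dots> = Q"
      unfolding Q_def using W by (simp add: field_simps)
    finally have "eta (Suc r) * \<bar>q\<bar> \<le> Q" .
    moreover have "(mofoT r - mofoT (Suc r)) $ j = eta (Suc r) * f $ j * q"
      unfolding q_def f_def by (simp add: mofo_Suc(3))
    ultimately show ?thesis
      using f[of j] eta by (auto simp: abs_mult)
  qed
  then have "norm (mofoT r - mofoT (Suc r)) \<le> Q * sqrt (\<Sum>j\<in>UNIV. f $ j)"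
    by (rule norm_le_masked[OF f _ Q])
  also have "\<dots> \<le> Q * sqrt (real CARD('n) * a + real B)"
    unfolding f_def using blk a Q by (intro mult_left_mono real_sqrt_le_mono sum_FLT_le) auto
  finally show ?thesis
    by (subst norm_minus_commute) (simp only: Q_def)
qed

lemma mofo_gradient_drift_le:
  assumes b: "0 \<le> b1" "b1 < sqrt b2" "b2 < 1" and blk: "\<And>j. blk j < B" and a: "0 \<le> a"
    and eta: "\<And>r. 0 \<le> eta r" and lip: "Lc-lipschitz_on UNIV G" and "s \<le> n"
  shows "\<bar>G (mofoT s) $ i - G (mofoT n) $ i\<bar>
    \<le> Lc * momentum_ratio_bound b1 b2 * sqrt (real CARD('n) * a + real B)
       * (\<Sum>r\<in>{s..<n}. eta (Suc r) * ((1 - b1) / (1 - b1 ^ Suc r)))"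
proof -
  have L: "0 \<le> Lc" using lip by (rule lipschitz_on_nonneg)
  have "\<bar>G (mofoT s) $ i - G (mofoT n) $ i\<bar> \<le> norm (G (mofoT n) - G (mofoT s))"
    using component_le_norm_cart[of "G (mofoT n) - G (mofoT s)" i] by simp
  also have "\<dots> \<le> Lc * norm (mofoT n - mofoT s)"
    using lipschitz_onD[OF lip] by (simp add: dist_norm)
  also have "mofoT n - mofoT s = (\<Sum>r\<in>{s..<n}. mofoT (Suc r) - mofoT r)"
    using sum_Suc_diff'[OF \<open>s \<le> n\<close>, of mofoT] by simp
  also have "Lc * norm \<dots> \<le> Lc * (\<Sum>r\<in>{s..<n}. norm (mofoT (Suc r) - mofoT r))"
    using norm_sum L by (rule mult_left_mono)
  also have "\<dots> \<le> Lc * (\<Sum>r\<in>{s..<n}. eta (Suc r) * ((1 - b1) / (1 - b1 ^ Suc r))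
       * momentum_ratio_bound b1 b2 * sqrt (real CARD('n) * a + real B))"
    using b blk a eta L by (intro mult_left_mono sum_mono mofo_step_norm_le)
  finally show ?thesis
    by (simp add: sum_distrib_left sum_distrib_right mult_ac)
qed

end

lemma mofo_sqrt_schedule_drift_le:
  fixes G :: "real^'n::{finite,linorder} \<Rightarrow> real^'n::{finite,linorder}"
  assumes b: "0 \<le> b1" "b1 < sqrt b2" "b2 < 1" and blk: "\<And>j. blk j < B" and a: "0 \<le> a"
    and eta: "0 \<le> eta" and lip: "Lc-lipschitz_on UNIV G" and "s \<le> n"
  shows "\<bar>G (mofo_theta G blk a b1 b2 (\<lambda>s. eta / sqrt (real s)) th0 s) $ i
      - G (mofo_theta G blk a b1 b2 (\<lambda>s. eta / sqrt (real s)) th0 n) $ i\<bar>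
    \<le> Lc * (momentum_ratio_bound b1 b2 * sqrt (real CARD('n) * a + real B)) * eta
       * (\<Sum>r\<in>{s..<n}. (1 - b1) / (1 - b1 ^ Suc r) / sqrt (real r + 1))"
  using mofo_gradient_drift_le[where G=G and blk=blk and init=th0 and i=i
      and eta="\<lambda>s. eta / sqrt (real s)", OF b blk a _ lip \<open>s \<le> n\<close>] eta
  by (simp add: sum_distrib_left mult_ac add.commute)

lemma ema_ratio_lower_bound_sqrt_schedule:
  fixes y :: "nat \<Rightarrow> real" and b1 b2 \<Lambda> K :: real
  assumes b1: "0 \<le> b1" "b1 < 1" and b2: "0 < b2" "b2 < 1" and \<Lambda>: "0 \<le> \<Lambda>" and K: "4 / (1 - b2) \<le> K"
    and drift: "\<And>s. s \<le> n \<Longrightarrow>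
      \<bar>y s - y n\<bar> \<le> \<Lambda> * (\<Sum>r\<in>{s..<n}. (1 - b1) / (1 - b1 ^ Suc r) / sqrt (real r + 1))"
  shows "sqrt (1 - b2) * (\<bar>y n\<bar> - K * \<Lambda> / sqrt (real n + 1))
    \<le> y n * ((1 / (1 - b1 ^ Suc n) * ema b1 n y) / sqrt (1 / (1 - b2 ^ Suc n) * ema b2 n (\<lambda>s. (y s)\<^sup>2)))"
proof -
  define x where "x r = (1 - b1) / (1 - b1 ^ Suc r) / sqrt (real r + 1)" for r
  define X where "X = \<Lambda> / sqrt (real n + 1)"
  have b2': "0 \<le> b2" using b2 by simp
  have x: "0 \<le> x r" "x r \<le> 1 / sqrt (real r + 1)" for r
  proof -
    have "b1 ^ Suc r \<le> b1"
      using mult_left_le[OF power_le_one[OF b1(1) less_imp_le[OF b1(2)]] b1(1), of r] by simp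
    then have h: "(1 - b1) / (1 - b1 ^ Suc r) \<le> 1" "0 \<le> (1 - b1) / (1 - b1 ^ Suc r)"
      using one_minus_power_Suc_pos[OF b1, of r] b1 by simp_all
    show "0 \<le> x r"
      unfolding x_def using h(2) by (rule divide_nonneg_nonneg) simp
    show "x r \<le> 1 / sqrt (real r + 1)"
      unfolding x_def using h(1) by (rule divide_right_mono) simp
  qed
  have "ema b1 n (\<lambda>s. \<Lambda> * (\<Sum>r\<in>{s..<n}. x r)) \<le> \<Lambda> * (2 * (1 - b1 ^ Suc n) / sqrt (real n + 1))"
    unfolding ema_scale x_def using ema_tail_sum_le[OF b1] \<Lambda> by (rule mult_left_mono)
  also have "\<dots> = (1 - b1 ^ Suc n) * (2 * X)"
    unfolding X_def by (simp add: field_simps)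
  finally have E1: "ema b1 n (\<lambda>s. \<Lambda> * (\<Sum>r\<in>{s..<n}. x r)) \<le> (1 - b1 ^ Suc n) * (2 * X)" .
  have "ema b2 n (\<lambda>s. (\<Lambda> * (\<Sum>r\<in>{s..<n}. x r))\<^sup>2) = \<Lambda>\<^sup>2 * ema b2 n (\<lambda>s. (\<Sum>r\<in>{s..<n}. x r)\<^sup>2)"
    unfolding power_mult_distrib by (rule ema_scale)
  also have "\<dots> \<le> \<Lambda>\<^sup>2 * ((1 - b2 ^ Suc n) * (16 * b2 / ((1 - b2)\<^sup>2 * (real n + 1))))"
    using ema_tail_sum_square_le[OF b2' b2(2) x] by (rule mult_left_mono) simp
  also have "\<dots> = (1 - b2 ^ Suc n) * (16 * b2 * X\<^sup>2 / (1 - b2)\<^sup>2)"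
    unfolding X_def by (simp add: power_divide field_simps)
  finally have E2: "ema b2 n (\<lambda>s. (\<Lambda> * (\<Sum>r\<in>{s..<n}. x r))\<^sup>2) \<le> (1 - b2 ^ Suc n) * (16 * b2 * X\<^sup>2 / (1 - b2)\<^sup>2)" .
  have "0 \<le> X" unfolding X_def using \<Lambda> by simp
  from ema_ratio_lower_bound[OF b1 b2 this K _ E1 E2] drift show ?thesis
    unfolding X_def x_def by simp
qed

theorem lemma4:
  fixes Loss :: "(real^'n::{finite,linorder}) \<Rightarrow> real"
    and G :: "(real^'n::{finite,linorder}) \<Rightarrow> (real^'n::{finite,linorder})"
    and blk :: "'n::{finite,linorder} \<Rightarrow> nat"
    and B :: nat
    and a b1 b2 eta Lc :: real
    and th0 :: "(real^'n::{finite,linorder})"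
  assumes grad: "\<And>x. GDERIV Loss x :> G x"
    and lip: "Lc-lipschitz_on UNIV G"
    and blocks: "\<And>i. blk i < B"
    and a: "0 < a" "a \<le> 1"
    and b: "0 < b1" "b1 < sqrt b2" "b2 < 1"
    and eta: "0 < eta"
    and t: "1 \<le> t"
  shows
    "let etas = (\<lambda>s::nat. eta / sqrt (real s));
         g = G (mofo_theta G blk a b1 b2 etas th0 (t - 1));
         mh = (1 / (1 - b1 ^ t)) *\<^sub>R mofo_m G blk a b1 b2 etas th0 t;
         vh = (1 / (1 - b2 ^ t)) *\<^sub>R mofo_v G blk a b1 b2 etas th0 t;
         C = sqrt (real CARD('n::{finite,linorder}) * a + real B) / (sqrt (1 - b2) * (1 - b1 / sqrt b2))
     in g$i * (mh$i / sqrt (vh$i)) \<ge>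
        sqrt (1 - b2) * (\<bar>g$i\<bar> -
          (2 * sqrt 2 * b1 / (1 - b1)^2 + 4 / (1 - b2)) * Lc * C * eta / sqrt (real t))"
proof -
  obtain n where tn: "t = Suc n" using t by (cases t) auto
  define etas where "etas = (\<lambda>s::nat. eta / sqrt (real s))"
  define C where "C = sqrt (real CARD('n) * a + real B) / (sqrt (1 - b2) * (1 - b1 / sqrt b2))"
  define y where "y s = G (mofo_theta G blk a b1 b2 etas th0 s) $ i" for s
  have b1: "0 \<le> b1" "b1 < 1" and b2: "0 < b2" "b2 < 1" using b beta_bounds[of b1 b2] by auto
  have C: "C = momentum_ratio_bound b1 b2 * sqrt (real CARD('n) * a + real B)"
    unfolding C_def momentum_ratio_bound_def by simp
  have "0 \<le> C" unfolding C using momentum_ratio_bound_pos[of b1 b2] b a by simp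
  then have \<Lambda>: "0 \<le> Lc * C * eta" using lipschitz_on_nonneg[OF lip] eta by simp
  have drift: "\<bar>y s - y n\<bar> \<le> Lc * C * eta * (\<Sum>r\<in>{s..<n}. (1 - b1) / (1 - b1 ^ Suc r) / sqrt (real r + 1))"
    if "s \<le> n" for s
    unfolding y_def etas_def C using b1(1) b(2,3) blocks a(1) eta lip that
    by (intro mofo_sqrt_schedule_drift_le) auto
  have K: "4 / (1 - b2) \<le> 2 * sqrt 2 * b1 / (1 - b1)\<^sup>2 + 4 / (1 - b2)"
    using b1 by simp
  have "sqrt (1 - b2) * (\<bar>y n\<bar> - (2 * sqrt 2 * b1 / (1 - b1)\<^sup>2 + 4 / (1 - b2)) * (Lc * C * eta) / sqrt (real n + 1))
    \<le> y n * ((1 / (1 - b1 ^ Suc n) * ema b1 n y) / sqrt (1 / (1 - b2 ^ Suc n) * ema b2 n (\<lambda>s. (y s)\<^sup>2)))"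
    by (rule ema_ratio_lower_bound_sqrt_schedule[OF b1 b2 \<Lambda> K drift])
  moreover have "ema b1 n y = mofo_m G blk a b1 b2 etas th0 (Suc n) $ i"
    "ema b2 n (\<lambda>s. (y s)\<^sup>2) = mofo_v G blk a b1 b2 etas th0 (Suc n) $ i"
    unfolding y_def by (simp_all add: mofo_m_eq_ema mofo_v_eq_ema)
  ultimately show ?thesis
    unfolding Let_def tn etas_def[symmetric] C_def[symmetric] by (simp add: y_def mult.assoc add.commute)
qed

end
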